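(* Let $\alpha,\beta>0$. For nonnegative, a.e.-finite, measurable functions $f,g$ on $(0,\infty)$ define $$ \underline{\mu}_{\alpha}(f) := \int_0^\infty\operatorname{ess\,sup}_{0<s\leq r} f(s)\,\frac{dr}{r^{1+\alpha}} \,, \qquad \overline{\mu}_{\beta}(f) := \int_0^\infty\operatorname{ess\,sup}_{r\leq s<\infty} f(s)\,\frac{dr}{r^{1-\beta}} \,, $$ $$ \overline{\nu}_\alpha(g) := \sup_{r>0} r^{\alpha} \int_r^\infty g(s) \,ds \,, \qquad \underline{\nu}_\beta(g) := \sup_{r>0} r^{-\beta} \int_0^r g(s) \,ds \,. $$ Then, for any nonnegative, measurable function $f$ on $(0,\infty)$, $$ \sup\left\{ \int_0^\infty fg\,dr:\ g\geq 0 \,,\ \overline\nu_\alpha(g) \leq 1 \right\} = \alpha\, \underline\mu_\alpha(f) \quad\text{and}\quad \sup\left\{ \int_0^\infty fg\,dr:\ g\geq 0\,,\ \underline\nu_\beta(g) \leq 1 \right\} = \beta\, \overline\mu_\beta(f) \,, $$ and conversely, for any nonnegative, measurable function $g$ on $(0,\infty)$, $$ \sup\left\{ \int_0^\infty fg\,dr:\ f\geq 0\,,\ \underline\mu_\alpha(f) \leq 1 \right\} = \alpha\, \overline\nu_\alpha(g) \quad\text{and}\quad \sup\left\{ \int_0^\infty fg\,dr:\ f\geq 0\,,\ \overline\mu_\beta(f) \leq 1 \right\} = \beta\, \underline\nu_\beta(g) \,. $$ (The suprema are over nonnegative measurable functions on $(0,\infty)$.) *)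

theory Defs
  imports "HOL-Analysis.Analysis" "HOL-Probability.Essential_Supremum"
begin

definition M0 :: "real measure" where
  "M0 = restrict_space lborel {0<..}"

text \<open>Nonnegative (real-valued, hence finite) measurable functions on (0,\<infinity>).\<close>
definition nonneg_meas :: "(real \<Rightarrow> real) \<Rightarrow> bool" where
  "nonneg_meas f \<longleftrightarrow> f \<in> borel_measurable M0 \<and> (\<forall>r>0. 0 \<le> f r)"

definition mu_low :: "real \<Rightarrow> (real \<Rightarrow> real) \<Rightarrow> ennreal" where
  "mu_low \<alpha> f = (\<integral>\<^sup>+ r. esssup (restrict_space lborel {0<..r}) (\<lambda>s. ennreal (f s))
                        * ennreal (1 / r powr (1 + \<alpha>)) \<partial>M0)"

definition mu_up :: "real \<Rightarrow> (real \<Rightarrow> real) \<Rightarrow> ennreal" where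
  "mu_up \<beta> f = (\<integral>\<^sup>+ r. esssup (restrict_space lborel {r..}) (\<lambda>s. ennreal (f s))
                        * ennreal (1 / r powr (1 - \<beta>)) \<partial>M0)"

definition nu_up :: "real \<Rightarrow> (real \<Rightarrow> real) \<Rightarrow> ennreal" where
  "nu_up \<alpha> g = (SUP r\<in>{0<..}. ennreal (r powr \<alpha>) * (\<integral>\<^sup>+ s\<in>{r<..}. ennreal (g s) \<partial>lborel))"

definition nu_low :: "real \<Rightarrow> (real \<Rightarrow> real) \<Rightarrow> ennreal" where
  "nu_low \<beta> g = (SUP r\<in>{0<..}. ennreal (r powr (- \<beta>)) * (\<integral>\<^sup>+ s\<in>{0<..r}. ennreal (g s) \<partial>lborel))"

definition pair_int :: "(real \<Rightarrow> real) \<Rightarrow> (real \<Rightarrow> real) \<Rightarrow> ennreal" where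
  "pair_int f g = (\<integral>\<^sup>+ r. ennreal (f r * g r) \<partial>M0)"

end

theory Submission
  imports Defs
begin

text \<open>
  Write \<open>F r\<close> for the essential supremum of \<open>f\<close> over \<open>(0, r]\<close>. It is nondecreasing and
  left-continuous, and \<open>\<alpha> * mu_low \<alpha> f\<close> is the integral of \<open>F\<close> against the density
  \<open>w t = \<alpha> / t powr (1 + \<alpha>)\<close>, whose tails are \<open>\<integral>\<^sub>r\<^sup>\<infinity> w = r powr - \<alpha>\<close>.

  Upper bound: by the layer-cake formula it suffices to compare, level by level, the mass of \<open>g\<close>
  on \<open>{f > l}\<close> with the mass of \<open>w\<close> on \<open>{F > l}\<close>. Up to a null set, \<open>{f > l}\<close> lies to the
  right of \<open>a = inf {F > l}\<close> while \<open>{F > l}\<close> contains \<open>(a, \<infinity>)\<close>, so the first mass is at most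
  \<open>nu_up \<alpha> g * a powr - \<alpha>\<close> and the second is at least \<open>a powr - \<alpha>\<close>.

  Lower bound: the constraint \<open>nu_up \<alpha> g \<le> 1\<close> only bounds the tails of \<open>g\<close> by those of \<open>w\<close>, so
  the mass of \<open>w\<close> may be moved to the left. On a grid, the mass of each cell \<open>[p, p')\<close> is moved onto
  the points of \<open>(0, p]\<close> where \<open>f\<close> nearly attains \<open>F p\<close>; Fatou's lemma lets the grid refine.
  For the dual identity the test functions \<open>\<alpha> * r powr \<alpha> * indicator {r<..}\<close> suffice.

  The identities for \<open>\<beta>\<close> are those for \<open>\<alpha> = \<beta>\<close> transported by the inversion \<open>s \<mapsto> 1 / s\<close>,
  which exchanges the suprema over \<open>(0, r]\<close> and \<open>[r, \<infinity>)\<close> and maps \<open>g s ds\<close> to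
  \<open>g (1 / x) / x\<^sup>2 dx\<close>.
\<close>

lemma esssup_cong:
  assumes "\<And>x. x \<in> space M \<Longrightarrow> f x = g x"
  shows "esssup M f = esssup M g"
proof (cases "f \<in> borel_measurable M")
  case True
  moreover have "g \<in> borel_measurable M"
    using True assms measurable_cong[of M f g] by blast
  ultimately show ?thesis
    using assms by (intro esssup_AE_cong) (auto intro: AE_I2)
next
  case False
  then have "g \<notin> borel_measurable M"
    using assms measurable_cong[of M f g] by blast
  with False show ?thesis by (simp add: esssup_non_measurable)
qed

lemma AE_le_esssup_restrict:
  assumes "A \<in> sets M"
  shows "AE x in M. x \<in> A \<longrightarrow> h x \<le> esssup (restrict_space M A) h"
  using esssup_AE[of h "restrict_space M A"] assms by (simp add: AE_restrict_space_iff)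

lemma esssup_restrict_le:
  assumes "A \<in> sets M" "h \<in> borel_measurable M" "AE x in M. x \<in> A \<longrightarrow> h x \<le> c"
  shows "esssup (restrict_space M A) h \<le> c"
  using assms by (intro esssup_I measurable_restrict_space1) (auto simp: AE_restrict_space_iff)

lemma esssup_restrict_mono:
  assumes "A \<in> sets M" "B \<in> sets M" "A \<subseteq> B" "h \<in> borel_measurable M"
  shows "esssup (restrict_space M A) h \<le> esssup (restrict_space M B) h"
  using assms AE_le_esssup_restrict[OF assms(2), of h]
  by (intro esssup_restrict_le) (auto elim: eventually_mono)

lemma esssup_restrict_less_imp_emeasure_pos:
  assumes "A \<in> sets M" "h \<in> borel_measurable M" "c < esssup (restrict_space M A) h"
  shows "0 < emeasure M {x\<in>A. c < h x}"
proof -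
  have "0 < emeasure (restrict_space M A) {x \<in> space (restrict_space M A). c < h x}"
    using assms by (intro esssup_pos_measure measurable_restrict_space1)
  moreover have "{x \<in> space (restrict_space M A). c < h x} = {x\<in>A. c < h x} \<inter> space M"
    by (auto simp: space_restrict_space)
  ultimately show ?thesis
    using assms by (simp add: emeasure_restrict_space sets.Int_space_eq2)
qed

lemma borel_measurable_mono_ennreal:
  fixes h :: "real \<Rightarrow> ennreal"
  assumes "mono h"
  shows "h \<in> borel_measurable borel"
proof (rule borel_measurableI_greater)
  fix y
  have "is_interval {x. y < h x}"
    using assms by (auto simp: is_interval_1 intro: less_le_trans dest: monoD)
  then show "{x \<in> space borel. y < h x} \<in> sets borel"
    by (simp add: real_interval_borel_measurable)
qed

lemma set_nn_integral_UN_incseq: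
  assumes "incseq A" "\<And>n. A n \<in> sets M" "h \<in> borel_measurable M"
  shows "(\<integral>\<^sup>+x\<in>(\<Union>n. A n). h x \<partial>M) = (SUP n. \<integral>\<^sup>+x\<in>A n. h x \<partial>M)"
proof -
  have "h x * indicator (\<Union>n. A n) x = (SUP n. h x * indicator (A n) x)" for x
  proof (cases "x \<in> (\<Union>n. A n)")
    case True
    then obtain n where "x \<in> A n" by blast
    then have "(SUP n. h x * indicator (A n) x) = h x"
      by (intro antisym SUP_least SUP_upper2[of n]) (auto split: split_indicator)
    with True show ?thesis by simp
  qed simp
  moreover have "incseq (\<lambda>n x. h x * indicator (A n) x)"
  proof (rule incseq_SucI, rule le_funI)
    fix n x
    show "h x * indicator (A n) x \<le> h x * indicator (A (Suc n)) x"
      using incseq_SucD[OF assms(1), of n] by (intro mult_left_mono) (auto split: split_indicator)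
  qed
  ultimately show ?thesis
    using assms(2,3) by (simp add: nn_integral_monotone_convergence_SUP)
qed

lemma set_nn_integral_greaterThan_0_eq_SUP:
  fixes h :: "real \<Rightarrow> ennreal"
  assumes "h \<in> borel_measurable borel"
  shows "(\<integral>\<^sup>+x\<in>{0<..}. h x \<partial>lborel) = (SUP n. \<integral>\<^sup>+x\<in>{inverse (Suc n)<..}. h x \<partial>lborel)"
proof -
  have "(\<Union>n. {inverse (real (Suc n))<..}) = {0<..}"
  proof (intro equalityI subsetI)
    fix x assume "x \<in> (\<Union>n. {inverse (real (Suc n))<..})"
    then obtain n where "inverse (real (Suc n)) < x" by blast
    moreover have "0 < inverse (real (Suc n))" by simp
    ultimately show "x \<in> {0<..}" by (metis greaterThan_iff less_trans)
  next
    fix x :: real assume "x \<in> {0<..}"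
    then obtain n where "inverse (real (Suc n)) < x" using reals_Archimedean by auto
    then show "x \<in> (\<Union>n. {inverse (real (Suc n))<..})" by blast
  qed
  moreover have "incseq (\<lambda>n. {inverse (real (Suc n))<..})"
    by (intro monoI) (auto simp: field_simps)
  ultimately show ?thesis
    using assms set_nn_integral_UN_incseq[of "\<lambda>n. {inverse (real (Suc n))<..}"] by simp
qed

lemma emeasure_lborel_layer: "emeasure lborel {l::real. 0 \<le> l \<and> ennreal l < X} = X"
proof (cases X rule: ennreal_cases)
  case (real x)
  then have "{l. 0 \<le> l \<and> ennreal l < X} = {0..<x}"
    by (auto simp: ennreal_less_iff)
  with real show ?thesis by simp
next
  case top
  have "emeasure lborel (\<Union>n. {0..real n}) = (SUP n. emeasure lborel {0..real n})"
    by (intro SUP_emeasure_incseq[symmetric]) (auto simp: incseq_def)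
  also have "\<dots> = top"
    using ennreal_SUP_of_nat_eq_top by (simp add: ennreal_of_nat_eq_real_of_nat)
  also have "(\<Union>n. {0..real n}) = {l. 0 \<le> l \<and> ennreal l < X}"
    using top by (auto intro: real_arch_simple)
  finally show ?thesis using top by simp
qed

lemma nn_integral_layer_cake:
  fixes f g :: "'a \<Rightarrow> ennreal"
  assumes "sigma_finite_measure M" and [measurable]: "f \<in> borel_measurable M" "g \<in> borel_measurable M"
  shows "(\<integral>\<^sup>+x. f x * g x \<partial>M) =
    (\<integral>\<^sup>+l\<in>{0..}. (\<integral>\<^sup>+x. g x * indicator {x. ennreal l < f x} x \<partial>M) \<partial>lborel)"
proof -
  interpret pair_sigma_finite M lborel
    using assms(1) by (simp add: pair_sigma_finite_def lborel.sigma_finite_measure_axioms)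
  have "(\<integral>\<^sup>+x. f x * g x \<partial>M) = (\<integral>\<^sup>+x. \<integral>\<^sup>+l. indicator {l. 0 \<le> l \<and> ennreal l < f x} l * g x \<partial>lborel \<partial>M)"
    by (intro nn_integral_cong) (simp add: nn_integral_multc emeasure_lborel_layer)
  also have "\<dots> = (\<integral>\<^sup>+l. \<integral>\<^sup>+x. indicator {l. 0 \<le> l \<and> ennreal l < f x} l * g x \<partial>M \<partial>lborel)"
    by (rule Fubini'[symmetric]) measurable
  also have "\<dots> = (\<integral>\<^sup>+l\<in>{0..}. (\<integral>\<^sup>+x. g x * indicator {x. ennreal l < f x} x \<partial>M) \<partial>lborel)"
  proof (intro nn_integral_cong)
    fix l :: real
    show "(\<integral>\<^sup>+x. indicator {l. 0 \<le> l \<and> ennreal l < f x} l * g x \<partial>M) =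
        (\<integral>\<^sup>+x. g x * indicator {x. ennreal l < f x} x \<partial>M) * indicator {0..} l"
      by (cases "0 \<le> l") (auto intro!: nn_integral_cong simp: mult.commute split: split_indicator)
  qed
  finally show ?thesis .
qed

lemma sum_mult_le_if_less:
  fixes X :: "'i \<Rightarrow> ennreal"
  assumes "\<And>c. (\<And>j. j \<in> J \<Longrightarrow> c j < X j \<or> c j = 0) \<Longrightarrow> (\<Sum>j\<in>J. c j * m j) \<le> S"
  shows "(\<Sum>j\<in>J. X j * m j) \<le> S"
proof -
  have "\<exists>u. incseq u \<and> (\<forall>k. u k < X j \<or> u k = 0) \<and> (SUP k. u k) = X j" for j
  proof -
    obtain u where "incseq u" "range u \<subseteq> insert 0 {..<X j}" "Sup (insert 0 {..<X j}) = (SUP k. u k)"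
      using ennreal_Sup_countable_SUP[of "insert 0 {..<X j}"] by (metis insert_not_empty)
    moreover have "Sup (insert 0 {..<X j}) = X j" by (simp add: Sup_lessThan sup.absorb2)
    ultimately show ?thesis by (intro exI[of _ u]) auto
  qed
  then obtain u where u: "\<And>j. incseq (u j) \<and> (\<forall>k. u j k < X j \<or> u j k = 0) \<and> (SUP k. u j k) = X j"
    by metis
  have "(\<Sum>j\<in>J. X j * m j) = (\<Sum>j\<in>J. SUP k. u j k * m j)"
    using u by (simp add: SUP_mult_right_ennreal[symmetric])
  also have "\<dots> = (SUP k. \<Sum>j\<in>J. u j k * m j)"
    using u by (intro ennreal_SUP_sum[symmetric]) (auto simp: incseq_def intro: mult_right_mono)
  also have "\<dots> \<le> S"
    using u by (intro SUP_least assms) auto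
  finally show ?thesis .
qed

lemma Sup_setcompr_transfer:
  assumes "\<And>x. P x \<Longrightarrow> Q (T x) \<and> a x = b (T x)" "\<And>y. Q y \<Longrightarrow> P (T' y) \<and> b y = a (T' y)"
  shows "Sup {a x | x. P x} = Sup {b y | y. Q y}"
  using assms by (intro arg_cong[where f = Sup]) blast

definition cutoff :: "(real \<Rightarrow> real) \<Rightarrow> real \<Rightarrow> real" where
  "cutoff f s = (if 0 < s then f s else 0)"

lemma space_M0 [simp]: "space M0 = {0<..}"
  by (simp add: M0_def space_restrict_space)

lemma nn_integral_M0: "(\<integral>\<^sup>+s. h s \<partial>M0) = (\<integral>\<^sup>+s\<in>{0<..}. h s \<partial>lborel)"
  unfolding M0_def by (rule nn_integral_restrict_space) simp

lemma borel_measurable_cutoff: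
  assumes "nonneg_meas f"
  shows "cutoff f \<in> borel_measurable borel"
proof -
  have "f \<in> borel_measurable (restrict_space lborel {0<..})"
    using assms by (simp add: nonneg_meas_def M0_def)
  then have "(\<lambda>s. if s \<in> {0<..} then f s else 0) \<in> borel_measurable lborel"
    by (subst (asm) measurable_restrict_space_iff) auto
  then show ?thesis by (simp add: cutoff_def[abs_def])
qed

lemma cutoff_nonneg: "nonneg_meas f \<Longrightarrow> 0 \<le> cutoff f s"
  by (simp add: nonneg_meas_def cutoff_def)

lemma cutoff_pos [simp]: "0 < s \<Longrightarrow> cutoff f s = f s"
  by (simp add: cutoff_def)

lemma nonneg_measI: "f \<in> borel_measurable borel \<Longrightarrow> (\<And>s. 0 \<le> f s) \<Longrightarrow> nonneg_meas f"
  by (auto simp: nonneg_meas_def M0_def intro: measurable_restrict_space1)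

lemma pair_int_cong:
  "(\<And>s. 0 < s \<Longrightarrow> f s = f' s) \<Longrightarrow> (\<And>s. 0 < s \<Longrightarrow> g s = g' s) \<Longrightarrow> pair_int f g = pair_int f' g'"
  unfolding pair_int_def by (rule nn_integral_cong) simp

lemma nu_up_cong:
  assumes "\<And>s. 0 < s \<Longrightarrow> g s = g' s"
  shows "nu_up \<alpha> g = nu_up \<alpha> g'"
proof -
  have "(\<integral>\<^sup>+s\<in>{r<..}. ennreal (g s) \<partial>lborel) = (\<integral>\<^sup>+s\<in>{r<..}. ennreal (g' s) \<partial>lborel)" if "0 < r" for r
    using assms that by (intro nn_integral_cong) (auto split: split_indicator)
  then show ?thesis unfolding nu_up_def by (intro SUP_cong) auto
qed

lemma nu_up_le_1I:
  assumes "\<And>r. 0 < r \<Longrightarrow> (\<integral>\<^sup>+s\<in>{r<..}. ennreal (g s) \<partial>lborel) \<le> ennreal (r powr - \<alpha>)"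
  shows "nu_up \<alpha> g \<le> 1"
  unfolding nu_up_def
proof (rule SUP_least)
  fix r :: real assume "r \<in> {0<..}"
  then have "ennreal (r powr \<alpha>) * (\<integral>\<^sup>+s\<in>{r<..}. ennreal (g s) \<partial>lborel) \<le> ennreal (r powr \<alpha>) * ennreal (r powr - \<alpha>)"
    using assms by (intro mult_left_mono) auto
  also have "\<dots> = 1"
    using \<open>r \<in> {0<..}\<close> by (simp add: ennreal_mult'[symmetric] powr_add[symmetric])
  finally show "ennreal (r powr \<alpha>) * (\<integral>\<^sup>+s\<in>{r<..}. ennreal (g s) \<partial>lborel) \<le> 1" .
qed

definition esssup_upto :: "(real \<Rightarrow> real) \<Rightarrow> real \<Rightarrow> ennreal" where
  "esssup_upto f r = esssup (restrict_space lborel {0<..r}) (\<lambda>s. ennreal (f s))"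

lemma esssup_upto_cong: "(\<And>s. 0 < s \<Longrightarrow> f s = f' s) \<Longrightarrow> esssup_upto f r = esssup_upto f' r"
  unfolding esssup_upto_def by (rule esssup_cong) (simp add: space_restrict_space)

lemma mu_low_esssup_upto:
  "mu_low \<alpha> f = (\<integral>\<^sup>+r. esssup_upto f r * ennreal (1 / r powr (1 + \<alpha>)) \<partial>M0)"
  by (simp add: mu_low_def esssup_upto_def)

lemma mu_low_cong: "(\<And>s. 0 < s \<Longrightarrow> f s = f' s) \<Longrightarrow> mu_low \<alpha> f = mu_low \<alpha> f'"
  unfolding mu_low_esssup_upto by (simp add: esssup_upto_cong[of f f'])

context
  fixes f :: "real \<Rightarrow> real"
  assumes f_borel [measurable]: "f \<in> borel_measurable borel"
begin

lemma mono_esssup_upto: "mono (esssup_upto f)"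
  unfolding esssup_upto_def by (intro monoI esssup_restrict_mono) auto

lemma borel_measurable_esssup_upto [measurable]: "esssup_upto f \<in> borel_measurable borel"
  by (rule borel_measurable_mono_ennreal[OF mono_esssup_upto])

lemma AE_le_esssup_upto: "AE s in lborel. 0 < s \<and> s \<le> r \<longrightarrow> ennreal (f s) \<le> esssup_upto f r"
  unfolding esssup_upto_def using AE_le_esssup_restrict[of "{0<..r}" lborel] by simp

lemma AE_le_if_esssup_upto_le:
  assumes "\<And>q. 0 < q \<Longrightarrow> q < b \<Longrightarrow> esssup_upto f q \<le> L"
  shows "AE s in lborel. 0 < s \<and> s < b \<longrightarrow> ennreal (f s) \<le> L"
proof -
  have "AE s in lborel. \<forall>q\<in>\<rat>. 0 < s \<and> s \<le> q \<longrightarrow> ennreal (f s) \<le> esssup_upto f q"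
    using AE_le_esssup_upto by (subst AE_ball_countable) (auto simp: countable_rat)
  then show ?thesis
  proof (rule eventually_mono, safe)
    fix s assume le: "\<forall>q\<in>\<rat>. 0 < s \<and> s \<le> q \<longrightarrow> ennreal (f s) \<le> esssup_upto f q"
      and "0 < s" "s < b"
    then obtain q where "q \<in> \<rat>" "s < q" "q < b" using Rats_dense_in_real by blast
    with le assms[of q] \<open>0 < s\<close> show "ennreal (f s) \<le> L" by force
  qed
qed

lemma AE_le_if_esssup_upto_le_all:
  assumes "\<And>q. 0 < q \<Longrightarrow> esssup_upto f q \<le> L"
  shows "AE s in lborel. 0 < s \<longrightarrow> ennreal (f s) \<le> L"
proof -
  have "AE s in lborel. \<forall>n::nat. 0 < s \<and> s < real n \<longrightarrow> ennreal (f s) \<le> L"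
    using assms by (subst AE_all_countable) (blast intro: AE_le_if_esssup_upto_le)
  then show ?thesis
    by (rule eventually_mono) (meson reals_Archimedean2)
qed

lemma esssup_upto_eq_SUP:
  assumes "0 < t"
  shows "esssup_upto f t = (SUP q\<in>{0<..<t}. esssup_upto f q)"
proof (rule antisym)
  let ?L = "SUP q\<in>{0<..<t}. esssup_upto f q"
  have "AE s in lborel. 0 < s \<and> s < t \<longrightarrow> ennreal (f s) \<le> ?L"
    by (rule AE_le_if_esssup_upto_le) (auto intro: SUP_upper)
  then have "AE s in lborel. s \<in> {0<..t} \<longrightarrow> ennreal (f s) \<le> ?L"
    using AE_lborel_singleton[of t] by eventually_elim auto
  then show "esssup_upto f t \<le> ?L"
    unfolding esssup_upto_def by (intro esssup_restrict_le) auto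
  show "?L \<le> esssup_upto f t"
    by (intro SUP_least monoD[OF mono_esssup_upto]) auto
qed

lemma less_esssup_upto_imp_emeasure_pos:
  "c < esssup_upto f t \<Longrightarrow> 0 < emeasure lborel {s\<in>{0<..t}. c < ennreal (f s)}"
  unfolding esssup_upto_def by (rule esssup_restrict_less_imp_emeasure_pos) auto

end

definition tail_weight :: "real \<Rightarrow> real \<Rightarrow> real" where
  "tail_weight \<alpha> t = \<alpha> / t powr (1 + \<alpha>)"

lemma borel_measurable_tail_weight [measurable]: "tail_weight \<alpha> \<in> borel_measurable borel"
  unfolding tail_weight_def by measurable

lemma tail_weight_integral_atLeast:
  assumes "0 < \<alpha>" "0 < c"
  shows "(\<integral>\<^sup>+t\<in>{c..}. ennreal (tail_weight \<alpha> t) \<partial>lborel) = ennreal (c powr - \<alpha>)"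
proof -
  have "((\<lambda>t. t powr - (1 + \<alpha>)) has_integral - (c powr (- (1 + \<alpha>) + 1)) / (- (1 + \<alpha>) + 1)) {c..}"
    using assms by (intro has_integral_powr_to_inf) auto
  from has_integral_mult_right[OF this, of \<alpha>]
  have "((\<lambda>t. \<alpha> * t powr - (1 + \<alpha>)) has_integral c powr - \<alpha>) {c..}"
    using assms by (simp add: field_simps)
  then have "(\<integral>\<^sup>+t. ennreal (indicator {c..} t * (\<alpha> * t powr - (1 + \<alpha>))) \<partial>lborel) = ennreal (c powr - \<alpha>)"
    using assms by (intro nn_integral_has_integral_lebesgue) auto
  moreover have "ennreal (indicator {c..} t * (\<alpha> * t powr - (1 + \<alpha>))) = ennreal (tail_weight \<alpha> t) * indicator {c..} t" for t
    using powr_minus_divide[of t "1 + \<alpha>"] by (simp add: tail_weight_def split: split_indicator)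
  ultimately show ?thesis by simp
qed

lemma tail_weight_integral_greaterThan:
  assumes "0 < \<alpha>" "0 < c"
  shows "(\<integral>\<^sup>+t\<in>{c<..}. ennreal (tail_weight \<alpha> t) \<partial>lborel) = ennreal (c powr - \<alpha>)"
proof -
  have "(\<integral>\<^sup>+t\<in>{c<..}. ennreal (tail_weight \<alpha> t) \<partial>lborel) = (\<integral>\<^sup>+t\<in>{c..}. ennreal (tail_weight \<alpha> t) \<partial>lborel)"
    using AE_lborel_singleton[of c] by (intro nn_integral_cong_AE) (auto split: split_indicator)
  with tail_weight_integral_atLeast[OF assms] show ?thesis by simp
qed

lemma tail_weight_integral_atLeastLessThan:
  assumes "0 < \<alpha>" "0 < c" "c \<le> d"
  shows "(\<integral>\<^sup>+t\<in>{c..<d}. ennreal (tail_weight \<alpha> t) \<partial>lborel) = ennreal (c powr - \<alpha> - d powr - \<alpha>)"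
proof -
  have "ennreal (c powr - \<alpha>) =
      (\<integral>\<^sup>+t. ennreal (tail_weight \<alpha> t) * indicator {c..<d} t + ennreal (tail_weight \<alpha> t) * indicator {d..} t \<partial>lborel)"
    unfolding tail_weight_integral_atLeast[OF assms(1,2), symmetric]
    using assms(3) by (intro nn_integral_cong) (auto split: split_indicator)
  also have "\<dots> = (\<integral>\<^sup>+t\<in>{c..<d}. ennreal (tail_weight \<alpha> t) \<partial>lborel) + ennreal (d powr - \<alpha>)"
    using assms by (subst nn_integral_add) (auto simp: tail_weight_integral_atLeast)
  finally have "ennreal (c powr - \<alpha>) - ennreal (d powr - \<alpha>) = (\<integral>\<^sup>+t\<in>{c..<d}. ennreal (tail_weight \<alpha> t) \<partial>lborel)"
    by (simp add: ennreal_add_diff_cancel_right)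
  then show ?thesis by (simp add: ennreal_minus)
qed

lemma mu_low_eq_integral:
  assumes "0 < \<alpha>" "f \<in> borel_measurable borel"
  shows "ennreal \<alpha> * mu_low \<alpha> f = (\<integral>\<^sup>+t\<in>{0<..}. esssup_upto f t * ennreal (tail_weight \<alpha> t) \<partial>lborel)"
proof -
  have "ennreal \<alpha> * mu_low \<alpha> f =
      (\<integral>\<^sup>+t\<in>{0<..}. ennreal \<alpha> * (esssup_upto f t * ennreal (1 / t powr (1 + \<alpha>))) \<partial>lborel)"
    unfolding mu_low_esssup_upto nn_integral_M0 using assms
    by (subst nn_integral_cmult[symmetric]) (auto simp: mult.assoc)
  also have "\<dots> = (\<integral>\<^sup>+t\<in>{0<..}. esssup_upto f t * ennreal (tail_weight \<alpha> t) \<partial>lborel)"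
  proof (intro nn_integral_cong)
    fix t
    have "ennreal (tail_weight \<alpha> t) = ennreal \<alpha> * ennreal (1 / t powr (1 + \<alpha>))"
      using assms(1) by (simp add: tail_weight_def ennreal_mult[symmetric])
    then show "ennreal \<alpha> * (esssup_upto f t * ennreal (1 / t powr (1 + \<alpha>))) * indicator {0<..} t =
        esssup_upto f t * ennreal (tail_weight \<alpha> t) * indicator {0<..} t"
      by (simp add: mult_ac)
  qed
  finally show ?thesis .
qed

section \<open>The upper bound\<close>

lemma greaterThan_integral_le_nu_up:
  assumes "0 < \<alpha>" "0 \<le> a" "g \<in> borel_measurable borel"
  shows "(\<integral>\<^sup>+s\<in>{a<..}. ennreal (g s) \<partial>lborel)
    \<le> nu_up \<alpha> g * (\<integral>\<^sup>+t\<in>{a<..}. ennreal (tail_weight \<alpha> t) \<partial>lborel)"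
proof -
  have pos: "(\<integral>\<^sup>+s\<in>{r<..}. ennreal (g s) \<partial>lborel)
      \<le> nu_up \<alpha> g * (\<integral>\<^sup>+t\<in>{r<..}. ennreal (tail_weight \<alpha> t) \<partial>lborel)" if "0 < r" for r
  proof -
    have "ennreal (r powr \<alpha>) * (\<integral>\<^sup>+s\<in>{r<..}. ennreal (g s) \<partial>lborel) \<le> nu_up \<alpha> g"
      unfolding nu_up_def using that by (intro SUP_upper) auto
    then have "ennreal (r powr - \<alpha>) * (ennreal (r powr \<alpha>) * (\<integral>\<^sup>+s\<in>{r<..}. ennreal (g s) \<partial>lborel))
        \<le> ennreal (r powr - \<alpha>) * nu_up \<alpha> g"
      by (rule mult_left_mono) simp
    moreover have "ennreal (r powr - \<alpha>) * ennreal (r powr \<alpha>) = 1"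
      using that by (simp add: ennreal_mult'[symmetric] powr_add[symmetric])
    ultimately show ?thesis
      using tail_weight_integral_greaterThan[OF assms(1) that] by (simp add: mult.assoc[symmetric] mult.commute)
  qed
  show ?thesis
  proof (cases "a = 0")
    case True
    have "(SUP n. \<integral>\<^sup>+s\<in>{inverse (Suc n)<..}. ennreal (g s) \<partial>lborel)
        \<le> nu_up \<alpha> g * (\<integral>\<^sup>+t\<in>{0<..}. ennreal (tail_weight \<alpha> t) \<partial>lborel)"
    proof (rule SUP_least)
      fix n
      have "(\<integral>\<^sup>+s\<in>{inverse (Suc n)<..}. ennreal (g s) \<partial>lborel)
          \<le> nu_up \<alpha> g * (\<integral>\<^sup>+t\<in>{inverse (Suc n)<..}. ennreal (tail_weight \<alpha> t) \<partial>lborel)"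
        by (rule pos) simp
      also have "\<dots> \<le> nu_up \<alpha> g * (\<integral>\<^sup>+t\<in>{0<..}. ennreal (tail_weight \<alpha> t) \<partial>lborel)"
        by (intro mult_left_mono nn_integral_mono)
          (auto split: split_indicator intro: less_trans[of 0 "inverse (1 + real n)"])
      finally show "(\<integral>\<^sup>+s\<in>{inverse (Suc n)<..}. ennreal (g s) \<partial>lborel)
          \<le> nu_up \<alpha> g * (\<integral>\<^sup>+t\<in>{0<..}. ennreal (tail_weight \<alpha> t) \<partial>lborel)" .
    qed
    with True assms(3) show ?thesis
      by (simp add: set_nn_integral_greaterThan_0_eq_SUP)
  qed (use assms pos in simp)
qed

lemma level_set_integral_le_nu_up:
  assumes "0 < \<alpha>" "0 \<le> l" and [measurable]: "f \<in> borel_measurable borel" "g \<in> borel_measurable borel"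
  shows "(\<integral>\<^sup>+s\<in>{s. 0 < s \<and> l < f s}. ennreal (g s) \<partial>lborel)
    \<le> nu_up \<alpha> g * (\<integral>\<^sup>+t\<in>{t. 0 < t \<and> ennreal l < esssup_upto f t}. ennreal (tail_weight \<alpha> t) \<partial>lborel)"
proof (cases "{t. 0 < t \<and> ennreal l < esssup_upto f t} = {}")
  case True
  then have "esssup_upto f q \<le> ennreal l" if "0 < q" for q
    using that by (metis (mono_tags) empty_iff mem_Collect_eq not_less)
  then have "AE s in lborel. 0 < s \<longrightarrow> ennreal (f s) \<le> ennreal l"
    by (rule AE_le_if_esssup_upto_le_all[OF assms(3)])
  then have "(\<integral>\<^sup>+s\<in>{s. 0 < s \<and> l < f s}. ennreal (g s) \<partial>lborel) = 0"
    using assms(2) by (subst nn_integral_0_iff_AE) (auto elim!: eventually_mono split: split_indicator)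
  then show ?thesis by simp
next
  case False
  let ?U = "{t. 0 < t \<and> ennreal l < esssup_upto f t}"
  define a where "a = Inf ?U"
  have bdd: "bdd_below ?U" by (auto intro: bdd_belowI[of _ 0])
  have "0 \<le> a" unfolding a_def using False by (auto intro: cInf_greatest)
  have up: "{a<..} \<subseteq> ?U"
  proof
    fix t assume "t \<in> {a<..}"
    then obtain u where "u \<in> ?U" "u < t" using cInf_lessD[OF False] by (auto simp: a_def)
    then show "t \<in> ?U" using monoD[OF mono_esssup_upto[OF assms(3)], of u t] by auto
  qed
  have "AE s in lborel. 0 < s \<and> s < a \<longrightarrow> ennreal (f s) \<le> ennreal l"
  proof (rule AE_le_if_esssup_upto_le[OF assms(3)])
    fix q assume "0 < q" "q < a"
    then have "q \<notin> ?U" using cInf_lower[OF _ bdd] by (force simp: a_def)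
    with \<open>0 < q\<close> show "esssup_upto f q \<le> ennreal l" by (simp add: not_less)
  qed
  then have "AE s in lborel. ennreal (g s) * indicator {s. 0 < s \<and> l < f s} s \<le> ennreal (g s) * indicator {a<..} s"
    using AE_lborel_singleton[of a]
    by eventually_elim (use assms(2) in \<open>auto simp: not_less split: split_indicator\<close>)
  then have "(\<integral>\<^sup>+s\<in>{s. 0 < s \<and> l < f s}. ennreal (g s) \<partial>lborel) \<le> (\<integral>\<^sup>+s\<in>{a<..}. ennreal (g s) \<partial>lborel)"
    by (rule nn_integral_mono_AE)
  also have "\<dots> \<le> nu_up \<alpha> g * (\<integral>\<^sup>+t\<in>{a<..}. ennreal (tail_weight \<alpha> t) \<partial>lborel)"
    using assms \<open>0 \<le> a\<close> by (intro greaterThan_integral_le_nu_up) auto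
  also have "\<dots> \<le> nu_up \<alpha> g * (\<integral>\<^sup>+t\<in>?U. ennreal (tail_weight \<alpha> t) \<partial>lborel)"
    using up by (intro mult_left_mono nn_integral_mono) (auto split: split_indicator)
  finally show ?thesis .
qed

lemma pair_int_le_nu_up_mu_low:
  assumes "0 < \<alpha>" and [measurable]: "f \<in> borel_measurable borel" "g \<in> borel_measurable borel"
    and "\<And>s. 0 \<le> f s" "\<And>s. 0 \<le> g s"
  shows "pair_int f g \<le> nu_up \<alpha> g * (ennreal \<alpha> * mu_low \<alpha> f)"
proof -
  let ?F = "esssup_upto f" and ?w = "\<lambda>t. ennreal (tail_weight \<alpha> t) * indicator {0<..} t"
  have "pair_int f g = (\<integral>\<^sup>+s. ennreal (f s) * (ennreal (g s) * indicator {0<..} s) \<partial>lborel)"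
    unfolding pair_int_def nn_integral_M0 using assms(4,5) by (simp add: ennreal_mult mult.assoc)
  also have "\<dots> = (\<integral>\<^sup>+l\<in>{0..}. (\<integral>\<^sup>+s\<in>{s. 0 < s \<and> l < f s}. ennreal (g s) \<partial>lborel) \<partial>lborel)"
    by (subst nn_integral_layer_cake) (auto intro!: nn_integral_cong lborel.sigma_finite_measure_axioms
        simp: ennreal_less_iff split: split_indicator)
  also have "\<dots> \<le> (\<integral>\<^sup>+l\<in>{0..}. nu_up \<alpha> g * (\<integral>\<^sup>+t\<in>{t. 0 < t \<and> ennreal l < ?F t}. ennreal (tail_weight \<alpha> t) \<partial>lborel) \<partial>lborel)"
    using assms by (intro nn_integral_mono) (auto intro!: mult_right_mono level_set_integral_le_nu_up split: split_indicator)
  also have "\<dots> = (\<integral>\<^sup>+l. nu_up \<alpha> g *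
      ((\<integral>\<^sup>+t. ?w t * indicator {t. ennreal l < ?F t} t \<partial>lborel) * indicator {0..} l) \<partial>lborel)"
    by (simp add: mult.assoc indicator_inter_arith[symmetric] Int_def conj_commute)
  also have "\<dots> = nu_up \<alpha> g * (\<integral>\<^sup>+l\<in>{0..}. (\<integral>\<^sup>+t. ?w t * indicator {t. ennreal l < ?F t} t \<partial>lborel) \<partial>lborel)"
    by (rule nn_integral_cmult) measurable
  also have "\<dots> = nu_up \<alpha> g * (\<integral>\<^sup>+t. ?F t * ?w t \<partial>lborel)"
    by (subst nn_integral_layer_cake) (auto intro: lborel.sigma_finite_measure_axioms)
  also have "\<dots> = nu_up \<alpha> g * (ennreal \<alpha> * mu_low \<alpha> f)"
    using assms by (simp add: mu_low_eq_integral mult.assoc)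
  finally show ?thesis .
qed

section \<open>Near-extremal functions\<close>

lemma mu_low_indicator_greaterThan_le:
  assumes "0 < \<alpha>" "0 < r" "0 \<le> c"
  shows "ennreal \<alpha> * mu_low \<alpha> (\<lambda>s. c * indicator {r<..} s) \<le> ennreal (c * r powr - \<alpha>)"
proof -
  let ?f = "\<lambda>s. c * indicator {r<..} s :: real"
  have f_borel: "?f \<in> borel_measurable borel" by simp
  have F_le: "esssup_upto ?f t \<le> ennreal c * indicator {r<..} t" for t
    unfolding esssup_upto_def by (intro esssup_restrict_le AE_I2) (auto split: split_indicator)
  have "ennreal \<alpha> * mu_low \<alpha> ?f \<le> (\<integral>\<^sup>+t. ennreal c * (ennreal (tail_weight \<alpha> t) * indicator {r<..} t) \<partial>lborel)"
    unfolding mu_low_eq_integral[OF assms(1) f_borel]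
  proof (rule nn_integral_mono)
    fix t
    have "esssup_upto ?f t * ennreal (tail_weight \<alpha> t) * indicator {0<..} t
        \<le> ennreal c * indicator {r<..} t * ennreal (tail_weight \<alpha> t) * indicator {0<..} t"
      by (intro mult_right_mono F_le) auto
    then show "esssup_upto ?f t * ennreal (tail_weight \<alpha> t) * indicator {0<..} t
        \<le> ennreal c * (ennreal (tail_weight \<alpha> t) * indicator {r<..} t)"
      using assms(2) by (cases "r < t"; cases "0 < t") (simp_all add: mult_ac)
  qed
  also have "\<dots> = ennreal (c * r powr - \<alpha>)"
    using assms by (simp add: nn_integral_cmult tail_weight_integral_greaterThan ennreal_mult)
  finally show ?thesis .
qed

lemma nu_up_le_Sup_pair_int:
  assumes "0 < \<alpha>" and [measurable]: "g \<in> borel_measurable borel" and "\<And>s. 0 \<le> g s"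
  shows "ennreal \<alpha> * nu_up \<alpha> g \<le> Sup {pair_int f g | f. nonneg_meas f \<and> mu_low \<alpha> f \<le> 1}"
  unfolding nu_up_def SUP_mult_left_ennreal
proof (rule SUP_least)
  fix r :: real assume "r \<in> {0<..}"
  then have r: "0 < r" by simp
  define c where "c = \<alpha> * r powr \<alpha>"
  have "0 \<le> c" using assms(1) by (simp add: c_def)
  define f where "f s = c * indicator {r<..} s" for s
  have f_borel: "f \<in> borel_measurable borel" by (simp add: f_def[abs_def])
  have "ennreal \<alpha> * mu_low \<alpha> f \<le> ennreal \<alpha> * 1"
    using mu_low_indicator_greaterThan_le[OF assms(1) r \<open>0 \<le> c\<close>] r
    by (simp add: f_def[abs_def] c_def mult.assoc powr_add[symmetric])
  then have "mu_low \<alpha> f \<le> 1"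
    using assms(1) by (subst (asm) ennreal_mult_le_mult_iff) auto
  moreover have "nonneg_meas f"
    using \<open>0 \<le> c\<close> f_borel by (intro nonneg_measI) (auto simp: f_def)
  moreover have "pair_int f g = ennreal \<alpha> * (ennreal (r powr \<alpha>) * (\<integral>\<^sup>+s\<in>{r<..}. ennreal (g s) \<partial>lborel))"
  proof -
    have "pair_int f g = (\<integral>\<^sup>+s. ennreal c * (ennreal (g s) * indicator {r<..} s) \<partial>lborel)"
      unfolding pair_int_def nn_integral_M0 using r \<open>0 \<le> c\<close> assms(3)
      by (intro nn_integral_cong) (auto simp: f_def ennreal_mult split: split_indicator)
    then show ?thesis
      using assms(1) by (simp add: nn_integral_cmult c_def ennreal_mult mult.assoc)
  qed
  ultimately show "ennreal \<alpha> * (ennreal (r powr \<alpha>) * (\<integral>\<^sup>+s\<in>{r<..}. ennreal (g s) \<partial>lborel))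
      \<le> Sup {pair_int f g | f. nonneg_meas f \<and> mu_low \<alpha> f \<le> 1}"
    by (intro Sup_upper) (metis (mono_tags, lifting) mem_Collect_eq)
qed

(* A null set E j receives no mass, since m j / 0 = 0. *)
definition uniform_spread :: "'i set \<Rightarrow> ('i \<Rightarrow> real set) \<Rightarrow> ('i \<Rightarrow> real) \<Rightarrow> real \<Rightarrow> real" where
  "uniform_spread J E m s = (\<Sum>j\<in>J. m j / measure lborel (E j) * indicator (E j) s)"

context
  fixes J :: "'i set" and E :: "'i \<Rightarrow> real set" and m :: "'i \<Rightarrow> real"
  assumes finite_J: "finite J"
    and sets_E [measurable]: "\<And>j. E j \<in> sets borel"
    and finite_E: "\<And>j. emeasure lborel (E j) < \<infinity>"
    and m_nonneg: "\<And>j. j \<in> J \<Longrightarrow> 0 \<le> m j"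
begin

lemma emeasure_E_eq_measure: "emeasure lborel (E j) = ennreal (measure lborel (E j))"
  using finite_E[of j] by (intro emeasure_eq_ennreal_measure) auto

lemma uniform_spread_nonneg: "0 \<le> uniform_spread J E m s"
  unfolding uniform_spread_def using m_nonneg by (intro sum_nonneg) auto

lemma borel_measurable_uniform_spread [measurable]: "uniform_spread J E m \<in> borel_measurable borel"
  unfolding uniform_spread_def[abs_def] by measurable

lemma ennreal_uniform_spread:
  "ennreal (uniform_spread J E m s) = (\<Sum>j\<in>J. ennreal (m j / measure lborel (E j)) * indicator (E j) s)"
proof -
  have "ennreal (uniform_spread J E m s) = (\<Sum>j\<in>J. ennreal (m j / measure lborel (E j) * indicator (E j) s))"
    unfolding uniform_spread_def using m_nonneg by (intro sum_ennreal[symmetric]) auto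
  also have "\<dots> = (\<Sum>j\<in>J. ennreal (m j / measure lborel (E j)) * indicator (E j) s)"
    by (intro sum.cong refl) (simp split: split_indicator)
  finally show ?thesis .
qed

lemma set_integral_uniform_spread_le:
  assumes [measurable]: "A \<in> sets borel"
  shows "(\<integral>\<^sup>+s\<in>A. ennreal (uniform_spread J E m s) \<partial>lborel) \<le> (\<Sum>j\<in>{j\<in>J. E j \<inter> A \<noteq> {}}. ennreal (m j))"
proof -
  have "(\<integral>\<^sup>+s\<in>A. ennreal (uniform_spread J E m s) \<partial>lborel)
      = (\<integral>\<^sup>+s. (\<Sum>j\<in>J. ennreal (m j / measure lborel (E j)) * indicator (E j \<inter> A) s) \<partial>lborel)"
    unfolding ennreal_uniform_spread sum_distrib_right
    by (intro nn_integral_cong sum.cong) (auto split: split_indicator)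
  also have "\<dots> = (\<Sum>j\<in>J. ennreal (m j / measure lborel (E j)) * emeasure lborel (E j \<inter> A))"
    by (simp add: nn_integral_sum nn_integral_cmult_indicator)
  also have "\<dots> \<le> (\<Sum>j\<in>J. if E j \<inter> A \<noteq> {} then ennreal (m j) else 0)"
  proof (intro sum_mono)
    fix j assume "j \<in> J"
    have "ennreal (m j / measure lborel (E j)) * emeasure lborel (E j \<inter> A)
        \<le> ennreal (m j / measure lborel (E j)) * emeasure lborel (E j)"
      by (intro mult_left_mono emeasure_mono) auto
    also have "\<dots> \<le> ennreal (m j)"
      using m_nonneg[OF \<open>j \<in> J\<close>]
      by (cases "measure lborel (E j) = 0") (simp_all add: emeasure_E_eq_measure ennreal_mult''[symmetric])
    finally show "ennreal (m j / measure lborel (E j)) * emeasure lborel (E j \<inter> A)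
        \<le> (if E j \<inter> A \<noteq> {} then ennreal (m j) else 0)"
      by auto
  qed
  also have "\<dots> = (\<Sum>j\<in>{j\<in>J. E j \<inter> A \<noteq> {}}. ennreal (m j))"
    by (simp add: sum.inter_filter[OF finite_J])
  finally show ?thesis .
qed

lemma integral_uniform_spread_ge:
  fixes c :: "'i \<Rightarrow> ennreal" and h :: "real \<Rightarrow> ennreal"
  assumes [measurable]: "h \<in> borel_measurable borel"
    and "\<And>j. j \<in> J \<Longrightarrow> c j \<noteq> 0 \<Longrightarrow> 0 < emeasure lborel (E j)"
    and "\<And>j s. j \<in> J \<Longrightarrow> s \<in> E j \<Longrightarrow> c j \<le> h s"
  shows "(\<Sum>j\<in>J. c j * ennreal (m j)) \<le> (\<integral>\<^sup>+s. h s * ennreal (uniform_spread J E m s) \<partial>lborel)"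
proof -
  have "c j * ennreal (m j) \<le> ennreal (m j / measure lborel (E j)) * (\<integral>\<^sup>+s\<in>E j. h s \<partial>lborel)"
    if "j \<in> J" for j
  proof (cases "c j = 0")
    case False
    then have "ennreal (m j) = ennreal (m j / measure lborel (E j)) * emeasure lborel (E j)"
      using assms(2)[OF that] m_nonneg[OF that] by (simp add: emeasure_E_eq_measure ennreal_mult''[symmetric])
    then have "c j * ennreal (m j) = ennreal (m j / measure lborel (E j)) * (c j * emeasure lborel (E j))"
      by (simp add: mult_ac)
    also have "\<dots> \<le> ennreal (m j / measure lborel (E j)) * (\<integral>\<^sup>+s\<in>E j. h s \<partial>lborel)"
      using assms(3)[OF that]
      by (intro mult_left_mono, subst nn_integral_cmult_indicator[symmetric])
        (auto intro!: nn_integral_mono split: split_indicator)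
    finally show ?thesis .
  qed simp
  then have "(\<Sum>j\<in>J. c j * ennreal (m j))
      \<le> (\<Sum>j\<in>J. ennreal (m j / measure lborel (E j)) * (\<integral>\<^sup>+s\<in>E j. h s \<partial>lborel))"
    by (rule sum_mono)
  also have "\<dots> = (\<Sum>j\<in>J. \<integral>\<^sup>+s. ennreal (m j / measure lborel (E j)) * (h s * indicator (E j) s) \<partial>lborel)"
    by (simp add: nn_integral_cmult)
  also have "\<dots> = (\<integral>\<^sup>+s. (\<Sum>j\<in>J. ennreal (m j / measure lborel (E j)) * (h s * indicator (E j) s)) \<partial>lborel)"
    by (rule nn_integral_sum[symmetric]) measurable
  also have "\<dots> = (\<integral>\<^sup>+s. h s * ennreal (uniform_spread J E m s) \<partial>lborel)"
    by (simp add: ennreal_uniform_spread sum_distrib_left mult_ac)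
  finally show ?thesis .
qed

end

(* The mass m j is spread over the points of (0, p j] where f exceeds c j; as it only moves to
   the left of p j, the tail of g beyond r is at most the total mass of the p j > r. *)
lemma sum_le_Sup_pair_int_nu_up:
  fixes c :: "nat \<Rightarrow> ennreal" and p m :: "nat \<Rightarrow> real"
  assumes "0 < \<alpha>" and f_borel [measurable]: "f \<in> borel_measurable borel"
    and "finite J" "\<And>j. j \<in> J \<Longrightarrow> 0 \<le> m j"
    and level: "\<And>j. j \<in> J \<Longrightarrow> c j < esssup_upto f (p j) \<or> c j = 0"
    and tail: "\<And>r. 0 < r \<Longrightarrow> (\<Sum>j\<in>{j\<in>J. r < p j}. m j) \<le> r powr - \<alpha>"
  shows "(\<Sum>j\<in>J. c j * ennreal (m j)) \<le> Sup {pair_int f g | g. nonneg_meas g \<and> nu_up \<alpha> g \<le> 1}"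
proof -
  define E where "E j = {s\<in>{0<..p j}. c j < ennreal (f s)}" for j
  have sets_E [measurable]: "E j \<in> sets borel" for j
    by (simp add: E_def)
  have finite_E: "emeasure lborel (E j) < \<infinity>" for j
  proof -
    have "emeasure lborel (E j) \<le> emeasure lborel {0<..max 0 (p j)}"
      by (intro emeasure_mono) (auto simp: E_def)
    then show ?thesis
      using le_less_trans[OF _ ennreal_less_top] by simp
  qed
  note spread = uniform_spread_nonneg[OF assms(3) sets_E finite_E assms(4)]
    borel_measurable_uniform_spread[OF assms(3) sets_E finite_E assms(4)]
    set_integral_uniform_spread_le[OF assms(3) sets_E finite_E assms(4)]
    integral_uniform_spread_ge[OF assms(3) sets_E finite_E assms(4)]
  define g where "g = uniform_spread J E m"
  have "nonneg_meas g"
    using assms by (auto intro!: nonneg_measI spread simp: g_def)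
  moreover have "nu_up \<alpha> g \<le> 1"
  proof (rule nu_up_le_1I)
    fix r :: real assume "0 < r"
    have "(\<integral>\<^sup>+s\<in>{r<..}. ennreal (g s) \<partial>lborel) \<le> (\<Sum>j\<in>{j\<in>J. E j \<inter> {r<..} \<noteq> {}}. ennreal (m j))"
      unfolding g_def by (rule spread(3)) measurable
    also have "\<dots> \<le> (\<Sum>j\<in>{j\<in>J. r < p j}. ennreal (m j))"
      using assms(3) by (intro sum_mono2) (auto simp: E_def)
    also have "\<dots> \<le> ennreal (r powr - \<alpha>)"
      using tail[OF \<open>0 < r\<close>] assms(4) by (subst sum_ennreal) auto
    finally show "(\<integral>\<^sup>+s\<in>{r<..}. ennreal (g s) \<partial>lborel) \<le> ennreal (r powr - \<alpha>)" .
  qed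
  moreover have "(\<Sum>j\<in>J. c j * ennreal (m j)) \<le> pair_int f g"
  proof -
    have "0 < emeasure lborel (E j)" if "j \<in> J" "c j \<noteq> 0" for j
      using level[OF that(1)] that(2) less_esssup_upto_imp_emeasure_pos[OF f_borel, of "c j" "p j"]
      unfolding E_def by auto
    then have "(\<Sum>j\<in>J. c j * ennreal (m j)) \<le> (\<integral>\<^sup>+s. ennreal (f s) * ennreal (g s) \<partial>lborel)"
      unfolding g_def by (intro spread(4)) (auto simp: E_def)
    also have "\<dots> = pair_int f g"
      unfolding pair_int_def nn_integral_M0 using spread(1)
      by (intro nn_integral_cong) (auto simp: g_def uniform_spread_def E_def ennreal_mult'' split: split_indicator)
    finally show ?thesis .
  qed
  ultimately show ?thesis
    by (intro Sup_upper2[of "pair_int f g"]) auto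
qed

lemma grid_tail_sum_le:
  assumes "0 < \<alpha>" "0 < r" "0 < N"
  shows "(\<Sum>j\<in>{j\<in>{1..<M}. r < real j / N}. (real j / N) powr - \<alpha> - (real (Suc j) / N) powr - \<alpha>) \<le> r powr - \<alpha>"
proof -
  define h where "h j = (real j / N) powr - \<alpha>" for j
  define k where "k = nat \<lfloor>r * N\<rfloor> + 1"
  have h_antimono: "h (Suc j) \<le> h j" if "1 \<le> j" for j
    unfolding h_def using assms that by (intro powr_mono2') (auto simp: divide_right_mono)
  have "r * N < real k"
    unfolding k_def using assms by linarith
  then have "r \<le> real k / N" using assms(3) by (simp add: field_simps)
  then have "h k \<le> r powr - \<alpha>"
    unfolding h_def using assms by (intro powr_mono2') auto
  have "{j\<in>{1..<M}. r < real j / N} \<subseteq> {k..<M}"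
  proof safe
    fix j assume "j \<in> {1..<M}" "r < real j / N"
    then have "\<lfloor>r * N\<rfloor> < int j" using assms(3) by (simp add: floor_less_iff field_simps)
    then show "j \<in> {k..<M}" using \<open>j \<in> {1..<M}\<close> by (auto simp: k_def)
  qed
  then have "(\<Sum>j\<in>{j\<in>{1..<M}. r < real j / N}. h j - h (Suc j)) \<le> (\<Sum>j\<in>{k..<M}. h j - h (Suc j))"
    using h_antimono by (intro sum_mono2) (auto simp: k_def)
  also have "\<dots> \<le> h k"
  proof (cases "k \<le> M")
    case True
    have "(\<Sum>j\<in>{k..<M}. h (Suc j) - h j) = h M - h k"
      by (rule sum_Suc_diff'[OF True])
    then have "(\<Sum>j\<in>{k..<M}. h j - h (Suc j)) = h k - h M"
      by (simp only: sum_subtractf)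
    then show ?thesis by (simp add: h_def)
  qed (simp add: h_def)
  finally show ?thesis
    using \<open>h k \<le> r powr - \<alpha>\<close> by (simp add: h_def)
qed

definition grid_step :: "(real \<Rightarrow> ennreal) \<Rightarrow> nat \<Rightarrow> real \<Rightarrow> ennreal" where
  "grid_step F n t =
    (\<Sum>j\<in>{1..<Suc n * Suc n}. F (real j / Suc n) * indicator {real j / Suc n..<real (Suc j) / Suc n} t)"

lemma eventually_le_grid_step:
  fixes F :: "real \<Rightarrow> ennreal"
  assumes "mono F" "0 < q" "q < t"
  shows "\<forall>\<^sub>F n in sequentially. F q \<le> grid_step F n t"
proof -
  obtain n0 :: nat where n0: "max t (1 / (t - q)) < real n0"
    using reals_Archimedean2 by blast
  show ?thesis
    unfolding eventually_sequentially
  proof (intro exI allI impI)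
    fix n assume "n0 \<le> n"
    define N where "N = real (Suc n)"
    define j where "j = nat \<lfloor>t * N\<rfloor>"
    have "n0 < N" "0 < N" using \<open>n0 \<le> n\<close> by (simp_all add: N_def)
    then have "t < N" "1 / (t - q) < N" using n0 by auto
    then have "1 / N < t - q" using assms(3) \<open>0 < N\<close> by (simp add: field_simps)
    moreover have "0 < q * N" using assms(2) \<open>0 < N\<close> by simp
    ultimately have "1 \<le> t * N" using \<open>0 < N\<close> by (simp add: field_simps)
    then have j_ge: "1 \<le> j" by (simp add: j_def le_nat_floor)
    have "t * N < N * N" using \<open>t < N\<close> \<open>0 < N\<close> by (rule mult_strict_right_mono)
    moreover have "real_of_int (int (Suc n * Suc n)) = N * N" by (simp add: N_def algebra_simps)
    ultimately have "\<lfloor>t * N\<rfloor> < int (Suc n * Suc n)"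
      by (simp only: floor_less_iff)
    then have "j < Suc n * Suc n"
      unfolding j_def using \<open>1 \<le> t * N\<close> by (subst nat_less_iff) auto
    have "real j / N \<le> t" "t < real (Suc j) / N"
      using \<open>1 \<le> t * N\<close> by (auto simp: j_def N_def field_simps) linarith+
    moreover have "q \<le> real j / N"
      using \<open>1 / N < t - q\<close> \<open>1 \<le> t * N\<close> by (simp add: j_def N_def field_simps) linarith
    ultimately have "F q \<le> F (real j / N) * indicator {real j / N..<real (Suc j) / N} t"
      using monoD[OF assms(1)] by simp
    also have "\<dots> \<le> (\<Sum>j\<in>{1..<Suc n * Suc n}. F (real j / N) * indicator {real j / N..<real (Suc j) / N} t)"
      using j_ge \<open>j < Suc n * Suc n\<close> by (intro member_le_sum) auto
    finally show "F q \<le> grid_step F n t"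
      by (simp add: grid_step_def N_def)
  qed
qed

lemma le_liminf_grid_step:
  fixes F :: "real \<Rightarrow> ennreal"
  assumes "mono F" "0 < t" "F t = (SUP q\<in>{0<..<t}. F q)"
  shows "F t * c \<le> liminf (\<lambda>n. grid_step F n t * c)"
  unfolding assms(3) SUP_mult_right_ennreal
proof (rule SUP_least)
  fix q assume "q \<in> {0<..<t}"
  then have "\<forall>\<^sub>F n in sequentially. F q \<le> grid_step F n t"
    using assms(1) by (intro eventually_le_grid_step) auto
  then have "\<forall>\<^sub>F n in sequentially. F q * c \<le> grid_step F n t * c"
    by (rule eventually_mono) (simp add: mult_right_mono)
  then show "F q * c \<le> liminf (\<lambda>n. grid_step F n t * c)"
    by (rule Liminf_bounded)
qed

lemma integral_grid_step_le_Sup_pair_int: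
  assumes "0 < \<alpha>" and f_borel [measurable]: "f \<in> borel_measurable borel"
  shows "(\<integral>\<^sup>+t. grid_step (esssup_upto f) n t * ennreal (tail_weight \<alpha> t) \<partial>lborel)
    \<le> Sup {pair_int f g | g. nonneg_meas g \<and> nu_up \<alpha> g \<le> 1}"
proof -
  define p where "p j = real j / real (Suc n)" for j
  define m where "m j = p j powr - \<alpha> - p (Suc j) powr - \<alpha>" for j
  define J where "J = {1..<Suc n * Suc n}"
  have p_pos: "0 < p j" if "j \<in> J" for j
    using that by (simp add: p_def J_def)
  have p_mono: "p j \<le> p (Suc j)" for j
    by (simp add: p_def divide_right_mono)
  have "(\<integral>\<^sup>+t. grid_step (esssup_upto f) n t * ennreal (tail_weight \<alpha> t) \<partial>lborel)
      = (\<Sum>j\<in>J. esssup_upto f (p j) * ennreal (m j))"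
    using p_pos p_mono assms(1) unfolding grid_step_def sum_distrib_right p_def[symmetric] J_def[symmetric]
    by (simp add: nn_integral_sum nn_integral_cmult mult.assoc tail_weight_integral_atLeastLessThan m_def
        mult.commute[of "indicator _ _"])
  also have "\<dots> \<le> Sup {pair_int f g | g. nonneg_meas g \<and> nu_up \<alpha> g \<le> 1}"
  proof (rule sum_mult_le_if_less)
    fix c assume "\<And>j. j \<in> J \<Longrightarrow> c j < esssup_upto f (p j) \<or> c j = 0"
    moreover have "0 \<le> m j" if "j \<in> J" for j
      unfolding m_def using p_pos[OF that] p_mono[of j] assms(1) by (simp add: powr_mono2')
    moreover have "(\<Sum>j\<in>{j\<in>J. r < p j}. m j) \<le> r powr - \<alpha>" if "0 < r" for r
      using grid_tail_sum_le[OF assms(1) that, of "real (Suc n)" "Suc n * Suc n"]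
      by (simp add: m_def p_def J_def)
    ultimately show "(\<Sum>j\<in>J. c j * ennreal (m j)) \<le> Sup {pair_int f g | g. nonneg_meas g \<and> nu_up \<alpha> g \<le> 1}"
      using assms by (intro sum_le_Sup_pair_int_nu_up) (auto simp: J_def)
  qed
  finally show ?thesis .
qed

(* The grid steps are not monotone in n, hence Fatou's lemma instead of monotone convergence. *)
lemma mu_low_le_Sup_pair_int:
  assumes "0 < \<alpha>" and f_borel [measurable]: "f \<in> borel_measurable borel"
  shows "ennreal \<alpha> * mu_low \<alpha> f \<le> Sup {pair_int f g | g. nonneg_meas g \<and> nu_up \<alpha> g \<le> 1}"
proof -
  let ?\<phi> = "\<lambda>n t. grid_step (esssup_upto f) n t * ennreal (tail_weight \<alpha> t)"
  have "ennreal \<alpha> * mu_low \<alpha> f \<le> (\<integral>\<^sup>+t. liminf (\<lambda>n. ?\<phi> n t) \<partial>lborel)"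
    unfolding mu_low_eq_integral[OF assms]
    by (intro nn_integral_mono) (auto intro!: le_liminf_grid_step mono_esssup_upto esssup_upto_eq_SUP
        split: split_indicator)
  also have "\<dots> \<le> liminf (\<lambda>n. \<integral>\<^sup>+t. ?\<phi> n t \<partial>lborel)"
    by (intro nn_integral_liminf) (simp add: grid_step_def)
  also have "\<dots> \<le> Sup {pair_int f g | g. nonneg_meas g \<and> nu_up \<alpha> g \<le> 1}"
    using integral_grid_step_le_Sup_pair_int[OF assms] by (intro Liminf_le) auto
  finally show ?thesis .
qed

lemma Sup_pair_int_nu_up_eq:
  assumes "0 < \<alpha>" "nonneg_meas f"
  shows "Sup {pair_int f g | g. nonneg_meas g \<and> nu_up \<alpha> g \<le> 1} = ennreal \<alpha> * mu_low \<alpha> f"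
proof (rule antisym)
  note f' = borel_measurable_cutoff[OF assms(2)] cutoff_nonneg[OF assms(2)]
  show "Sup {pair_int f g | g. nonneg_meas g \<and> nu_up \<alpha> g \<le> 1} \<le> ennreal \<alpha> * mu_low \<alpha> f"
  proof (rule Sup_least, safe)
    fix g assume g: "nonneg_meas g" "nu_up \<alpha> g \<le> 1"
    have "pair_int f g = pair_int (cutoff f) (cutoff g)" by (rule pair_int_cong) simp_all
    also have "\<dots> \<le> nu_up \<alpha> (cutoff g) * (ennreal \<alpha> * mu_low \<alpha> (cutoff f))"
      using assms(1) f' borel_measurable_cutoff[OF g(1)] cutoff_nonneg[OF g(1)]
      by (intro pair_int_le_nu_up_mu_low)
    also have "\<dots> = nu_up \<alpha> g * (ennreal \<alpha> * mu_low \<alpha> f)"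
      by (simp add: nu_up_cong[of "cutoff g" g] mu_low_cong[of "cutoff f" f])
    also have "\<dots> \<le> ennreal \<alpha> * mu_low \<alpha> f"
      using g(2) mult_right_mono[OF g(2), of "ennreal \<alpha> * mu_low \<alpha> f"] by simp
    finally show "pair_int f g \<le> ennreal \<alpha> * mu_low \<alpha> f" .
  qed
  have "ennreal \<alpha> * mu_low \<alpha> f = ennreal \<alpha> * mu_low \<alpha> (cutoff f)"
    by (simp add: mu_low_cong[of "cutoff f" f])
  also have "\<dots> \<le> Sup {pair_int (cutoff f) g | g. nonneg_meas g \<and> nu_up \<alpha> g \<le> 1}"
    using assms(1) f'(1) by (rule mu_low_le_Sup_pair_int)
  also have "\<dots> = Sup {pair_int f g | g. nonneg_meas g \<and> nu_up \<alpha> g \<le> 1}"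
    by (simp add: pair_int_cong[of "cutoff f" f])
  finally show "ennreal \<alpha> * mu_low \<alpha> f \<le> Sup {pair_int f g | g. nonneg_meas g \<and> nu_up \<alpha> g \<le> 1}" .
qed

lemma Sup_pair_int_mu_low_eq:
  assumes "0 < \<alpha>" "nonneg_meas g"
  shows "Sup {pair_int f g | f. nonneg_meas f \<and> mu_low \<alpha> f \<le> 1} = ennreal \<alpha> * nu_up \<alpha> g"
proof (rule antisym)
  note g' = borel_measurable_cutoff[OF assms(2)] cutoff_nonneg[OF assms(2)]
  show "Sup {pair_int f g | f. nonneg_meas f \<and> mu_low \<alpha> f \<le> 1} \<le> ennreal \<alpha> * nu_up \<alpha> g"
  proof (rule Sup_least, safe)
    fix f assume f: "nonneg_meas f" "mu_low \<alpha> f \<le> 1"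
    have "pair_int f g = pair_int (cutoff f) (cutoff g)" by (rule pair_int_cong) simp_all
    also have "\<dots> \<le> nu_up \<alpha> (cutoff g) * (ennreal \<alpha> * mu_low \<alpha> (cutoff f))"
      using assms(1) g' borel_measurable_cutoff[OF f(1)] cutoff_nonneg[OF f(1)]
      by (intro pair_int_le_nu_up_mu_low)
    also have "\<dots> = ennreal \<alpha> * nu_up \<alpha> g * mu_low \<alpha> f"
      by (simp add: nu_up_cong[of "cutoff g" g] mu_low_cong[of "cutoff f" f] mult_ac)
    also have "\<dots> \<le> ennreal \<alpha> * nu_up \<alpha> g"
      using mult_left_mono[OF f(2), of "ennreal \<alpha> * nu_up \<alpha> g"] by simp
    finally show "pair_int f g \<le> ennreal \<alpha> * nu_up \<alpha> g" .
  qed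
  have "ennreal \<alpha> * nu_up \<alpha> g = ennreal \<alpha> * nu_up \<alpha> (cutoff g)"
    by (simp add: nu_up_cong[of "cutoff g" g])
  also have "\<dots> \<le> Sup {pair_int f (cutoff g) | f. nonneg_meas f \<and> mu_low \<alpha> f \<le> 1}"
    using assms(1) g' by (rule nu_up_le_Sup_pair_int)
  also have "\<dots> = Sup {pair_int f g | f. nonneg_meas f \<and> mu_low \<alpha> f \<le> 1}"
    by (simp add: pair_int_cong[of _ _ "cutoff g" g])
  finally show "ennreal \<alpha> * nu_up \<alpha> g \<le> Sup {pair_int f g | f. nonneg_meas f \<and> mu_low \<alpha> f \<le> 1}" .
qed

section \<open>Inversion of the half-line\<close>

lemma nn_integral_inverse_substitution_interval:
  fixes h :: "real \<Rightarrow> ennreal"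
  assumes [measurable]: "h \<in> borel_measurable borel" and "1 < c"
  shows "(\<integral>\<^sup>+x\<in>{inverse c..c}. h x \<partial>lborel) = (\<integral>\<^sup>+x\<in>{inverse c..c}. ennreal (1 / x\<^sup>2) * h (inverse x) \<partial>lborel)"
proof -
  have "inverse c < c" using assms(2) less_imp_inverse_less[of 1 c] by simp
  have deriv: "((\<lambda>x. - inverse x) has_real_derivative inverse (x\<^sup>2)) (at x)" if "x \<in> {inverse c..c}" for x
  proof -
    have "0 < x" using that assms(2) by (auto intro: less_le_trans[rotated])
    then show ?thesis
      by (auto intro!: derivative_eq_intros simp: power2_eq_square)
  qed
  have "continuous_on {inverse c..c} (\<lambda>x. inverse (x\<^sup>2))"
    using assms(2) by (intro continuous_intros) auto
  from nn_integral_substitution_aux[of "\<lambda>y. h (- y)", OF _ _ deriv this _ \<open>inverse c < c\<close>]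
  have "(\<integral>\<^sup>+y\<in>{- c..- inverse c}. h (- y) \<partial>lborel) = (\<integral>\<^sup>+x\<in>{inverse c..c}. h (inverse x) * ennreal (inverse (x\<^sup>2)) \<partial>lborel)"
    by simp
  moreover have "(\<integral>\<^sup>+y\<in>{- c..- inverse c}. h (- y) \<partial>lborel)
      = (\<integral>\<^sup>+y. h (- y) * indicator {inverse c..c} (- y) \<partial>lborel)"
    by (intro nn_integral_cong) (auto split: split_indicator)
  moreover have "\<dots> = (\<integral>\<^sup>+x\<in>{inverse c..c}. h x \<partial>lborel)"
    using nn_integral_real_affine[of "\<lambda>x. h x * indicator {inverse c..c} x" "- 1" 0] by simp
  ultimately show ?thesis
    by (simp add: divide_inverse mult.commute)
qed

lemma nn_integral_inverse_substitution:
  fixes h :: "real \<Rightarrow> ennreal"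
  assumes [measurable]: "h \<in> borel_measurable borel"
  shows "(\<integral>\<^sup>+x\<in>{0<..}. h x \<partial>lborel) = (\<integral>\<^sup>+x\<in>{0<..}. ennreal (1 / x\<^sup>2) * h (inverse x) \<partial>lborel)"
proof -
  define A where "A n = {inverse (real (Suc (Suc n)))..real (Suc (Suc n))}" for n
  have "incseq A"
    by (intro monoI) (auto simp: A_def field_simps)
  have UN_A: "(\<Union>n. A n) = {0<..}"
  proof (intro equalityI subsetI)
    fix x assume "x \<in> (\<Union>n. A n)"
    then show "x \<in> {0<..}" by (auto simp: A_def intro: less_le_trans[rotated])
  next
    fix x :: real assume "x \<in> {0<..}"
    obtain n :: nat where "max x (inverse x) < n" using reals_Archimedean2 by blast
    with \<open>x \<in> {0<..}\<close> have "x \<in> A n" by (auto simp: A_def field_simps)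
    then show "x \<in> (\<Union>n. A n)" by blast
  qed
  have SUP_A: "(\<integral>\<^sup>+x\<in>{0<..}. H x \<partial>lborel) = (SUP n. \<integral>\<^sup>+x\<in>A n. H x \<partial>lborel)"
    if "H \<in> borel_measurable borel" for H
    unfolding UN_A[symmetric] using that by (intro set_nn_integral_UN_incseq[OF \<open>incseq A\<close>]) (auto simp: A_def)
  have "(\<integral>\<^sup>+x\<in>{0<..}. ennreal (1 / x\<^sup>2) * h (inverse x) \<partial>lborel)
      = (SUP n. \<integral>\<^sup>+x\<in>A n. ennreal (1 / x\<^sup>2) * h (inverse x) \<partial>lborel)"
    by (rule SUP_A) measurable
  also have "\<dots> = (SUP n. \<integral>\<^sup>+x\<in>A n. h x \<partial>lborel)"
    unfolding A_def by (intro SUP_cong refl nn_integral_inverse_substitution_interval[symmetric]) auto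
  also have "\<dots> = (\<integral>\<^sup>+x\<in>{0<..}. h x \<partial>lborel)"
    by (rule SUP_A[symmetric]) measurable
  finally show ?thesis ..
qed

lemma inverse_greaterThan_0: "inverse ` {0<..} = {0::real<..}"
  by (auto intro: image_eqI[of _ inverse "inverse x" for x])

lemma AE_inverse_iff:
  fixes P :: "real \<Rightarrow> bool"
  assumes "{s. P s} \<in> sets borel"
  shows "(AE x in lborel. 0 < x \<longrightarrow> P (inverse x)) \<longleftrightarrow> (AE s in lborel. 0 < s \<longrightarrow> P s)"
proof -
  have [measurable]: "Measurable.pred borel P"
    using assms by (simp add: pred_def)
  have "(\<lambda>s. indicator {s. \<not> P s} s * indicator {0<..} s :: ennreal) \<in> borel_measurable borel"
    by measurable
  then have "(AE s in lborel. 0 < s \<longrightarrow> P s) \<longleftrightarrow> (\<integral>\<^sup>+s\<in>{0<..}. indicator {s. \<not> P s} s \<partial>lborel) = 0"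
    by (subst nn_integral_0_iff_AE) (auto split: split_indicator)
  also have "\<dots> \<longleftrightarrow> (\<integral>\<^sup>+x\<in>{0<..}. ennreal (1 / x\<^sup>2) * indicator {s. \<not> P s} (inverse x) \<partial>lborel) = 0"
    by (subst nn_integral_inverse_substitution) auto
  also have "\<dots> \<longleftrightarrow> (AE x in lborel. 0 < x \<longrightarrow> P (inverse x))"
    by (subst nn_integral_0_iff_AE) (auto split: split_indicator)
  finally show ?thesis ..
qed

(* inversion 0 acts on the functions f and inversion 2 on the densities g: s = 1 / x gives
   ds = dx / x\<^sup>2. *)
definition inversion :: "nat \<Rightarrow> (real \<Rightarrow> real) \<Rightarrow> real \<Rightarrow> real" where
  "inversion k f x = (if 0 < x then f (inverse x) / x ^ k else 0)"

lemma borel_measurable_inversion: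
  assumes "nonneg_meas f"
  shows "inversion k f \<in> borel_measurable borel"
proof -
  have [measurable]: "cutoff f \<in> borel_measurable borel"
    using assms by (rule borel_measurable_cutoff)
  have "inversion k f = (\<lambda>x. if 0 < x then cutoff f (inverse x) / x ^ k else 0)"
    by (simp add: fun_eq_iff inversion_def)
  then show ?thesis by simp
qed

lemma nonneg_meas_inversion: "nonneg_meas f \<Longrightarrow> nonneg_meas (inversion k f)"
  by (rule nonneg_measI[OF borel_measurable_inversion]) (auto simp: inversion_def nonneg_meas_def)

lemma inversion_inversion: "0 < x \<Longrightarrow> inversion k (inversion k f) x = f x"
  by (simp add: inversion_def power_inverse)

lemma pair_int_inversion:
  assumes "nonneg_meas f" "nonneg_meas g"
  shows "pair_int (inversion 0 f) (inversion 2 g) = pair_int f g"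
proof -
  have [measurable]: "cutoff f \<in> borel_measurable borel" "cutoff g \<in> borel_measurable borel"
    using assms by (auto intro: borel_measurable_cutoff)
  have "pair_int f g = (\<integral>\<^sup>+x\<in>{0<..}. ennreal (cutoff f x * cutoff g x) \<partial>lborel)"
    unfolding pair_int_def nn_integral_M0 by (intro nn_integral_cong) (simp split: split_indicator)
  also have "\<dots> = (\<integral>\<^sup>+x\<in>{0<..}. ennreal (1 / x\<^sup>2) * ennreal (cutoff f (inverse x) * cutoff g (inverse x)) \<partial>lborel)"
    by (rule nn_integral_inverse_substitution) measurable
  also have "\<dots> = pair_int (inversion 0 f) (inversion 2 g)"
    unfolding pair_int_def nn_integral_M0 using assms
    by (intro nn_integral_cong) (auto simp: inversion_def ennreal_mult''[symmetric] nonneg_meas_def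
        split: split_indicator)
  finally show ?thesis ..
qed

lemma pair_int_inversion_left:
  assumes "nonneg_meas f" "nonneg_meas g"
  shows "pair_int (inversion 0 f) g = pair_int f (inversion 2 g)"
proof -
  have "pair_int (inversion 0 f) g = pair_int (inversion 0 f) (inversion 2 (inversion 2 g))"
    by (rule pair_int_cong) (simp_all add: inversion_inversion)
  also have "\<dots> = pair_int f (inversion 2 g)"
    using assms(1) nonneg_meas_inversion[OF assms(2)] by (rule pair_int_inversion)
  finally show ?thesis .
qed

lemma pair_int_inversion_right:
  assumes "nonneg_meas f" "nonneg_meas g"
  shows "pair_int f (inversion 2 g) = pair_int (inversion 0 f) g"
proof -
  have "pair_int f (inversion 2 g) = pair_int (inversion 0 (inversion 0 f)) (inversion 2 g)"
    by (rule pair_int_cong) (simp_all add: inversion_inversion)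
  also have "\<dots> = pair_int (inversion 0 f) g"
    using nonneg_meas_inversion[OF assms(1)] assms(2) by (rule pair_int_inversion)
  finally show ?thesis .
qed

lemma nu_up_inversion:
  assumes "nonneg_meas g"
  shows "nu_up \<beta> (inversion 2 g) = nu_low \<beta> g"
proof -
  have [measurable]: "cutoff g \<in> borel_measurable borel"
    using assms by (rule borel_measurable_cutoff)
  have integral: "(\<integral>\<^sup>+s\<in>{0<..r}. ennreal (g s) \<partial>lborel) = (\<integral>\<^sup>+x\<in>{inverse r<..}. ennreal (inversion 2 g x) \<partial>lborel)"
    if "0 < r" for r
  proof -
    have "(\<integral>\<^sup>+s\<in>{0<..r}. ennreal (g s) \<partial>lborel) = (\<integral>\<^sup>+s\<in>{0<..}. ennreal (cutoff g s) * indicator {..r} s \<partial>lborel)"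
      by (intro nn_integral_cong) (simp split: split_indicator)
    also have "\<dots> = (\<integral>\<^sup>+x\<in>{0<..}. ennreal (1 / x\<^sup>2) * (ennreal (cutoff g (inverse x)) * indicator {..r} (inverse x)) \<partial>lborel)"
      by (rule nn_integral_inverse_substitution) measurable
    also have "\<dots> = (\<integral>\<^sup>+x\<in>{inverse r..}. ennreal (inversion 2 g x) \<partial>lborel)"
      using assms that
      by (intro nn_integral_cong) (auto simp: inversion_def ennreal_mult''[symmetric] nonneg_meas_def
          field_simps split: split_indicator)
    also have "\<dots> = (\<integral>\<^sup>+x\<in>{inverse r<..}. ennreal (inversion 2 g x) \<partial>lborel)"
      using AE_lborel_singleton[of "inverse r"] by (intro nn_integral_cong_AE) (auto split: split_indicator)
    finally show ?thesis .
  qed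
  have "nu_low \<beta> g = (SUP r\<in>{0<..}. ennreal (inverse r powr \<beta>) * (\<integral>\<^sup>+x\<in>{inverse r<..}. ennreal (inversion 2 g x) \<partial>lborel))"
    unfolding nu_low_def by (intro SUP_cong) (auto simp: integral powr_minus inverse_powr)
  also have "\<dots> = nu_up \<beta> (inversion 2 g)"
    unfolding nu_up_def by (subst inverse_greaterThan_0[symmetric]) (simp add: image_comp)
  finally show ?thesis ..
qed

lemma nu_low_inversion:
  assumes "nonneg_meas g"
  shows "nu_low \<beta> (inversion 2 g) = nu_up \<beta> g"
proof -
  have "nu_low \<beta> (inversion 2 g) = nu_up \<beta> (inversion 2 (inversion 2 g))"
    using nonneg_meas_inversion[OF assms] by (rule nu_up_inversion[symmetric])
  also have "\<dots> = nu_up \<beta> g"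
    by (rule nu_up_cong) (simp add: inversion_inversion)
  finally show ?thesis .
qed

lemma esssup_atLeast_eq_esssup_upto_inversion:
  assumes "nonneg_meas f" "0 < t"
  shows "esssup (restrict_space lborel {t..}) (\<lambda>s. ennreal (f s)) = esssup_upto (inversion 0 f) (inverse t)"
proof -
  have [measurable]: "cutoff f \<in> borel_measurable borel" "inversion 0 f \<in> borel_measurable borel"
    using assms(1) by (auto intro: borel_measurable_cutoff borel_measurable_inversion)
  have "(AE s in lborel. s \<in> {t..} \<longrightarrow> ennreal (cutoff f s) \<le> z)
      \<longleftrightarrow> (AE x in lborel. x \<in> {0<..inverse t} \<longrightarrow> ennreal (inversion 0 f x) \<le> z)" for z
  proof -
    have "(AE s in lborel. s \<in> {t..} \<longrightarrow> ennreal (cutoff f s) \<le> z)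
        \<longleftrightarrow> (AE s in lborel. 0 < s \<longrightarrow> s \<in> {t..} \<longrightarrow> ennreal (cutoff f s) \<le> z)"
      using assms(2) by (intro AE_cong) auto
    also have "\<dots> \<longleftrightarrow> (AE x in lborel. 0 < x \<longrightarrow> inverse x \<in> {t..} \<longrightarrow> ennreal (cutoff f (inverse x)) \<le> z)"
      by (rule AE_inverse_iff[symmetric]) measurable
    also have "\<dots> \<longleftrightarrow> (AE x in lborel. x \<in> {0<..inverse t} \<longrightarrow> ennreal (inversion 0 f x) \<le> z)"
      using assms(2) by (intro AE_cong) (auto simp: inversion_def field_simps)
    finally show ?thesis .
  qed
  then have "esssup (restrict_space lborel {t..}) (\<lambda>s. ennreal (cutoff f s))
      = esssup (restrict_space lborel {0<..inverse t}) (\<lambda>x. ennreal (inversion 0 f x))"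
    by (simp add: esssup_eq_AE measurable_restrict_space1 AE_restrict_space_iff)
  moreover have "esssup (restrict_space lborel {t..}) (\<lambda>s. ennreal (f s))
      = esssup (restrict_space lborel {t..}) (\<lambda>s. ennreal (cutoff f s))"
    using assms(2) by (intro esssup_cong) (simp add: space_restrict_space)
  ultimately show ?thesis
    by (simp add: esssup_upto_def)
qed

lemma inversion_weight:
  fixes r \<beta> :: real
  assumes "0 < r"
  shows "1 / r\<^sup>2 * (1 / inverse r powr (1 + \<beta>)) = 1 / r powr (1 - \<beta>)"
proof -
  have "1 / inverse r powr (1 + \<beta>) = r powr (1 + \<beta>)"
    by (simp add: inverse_powr divide_inverse)
  moreover have "r\<^sup>2 = r powr 2"
    using assms by (simp add: powr_numeral)
  ultimately have "1 / r\<^sup>2 * (1 / inverse r powr (1 + \<beta>)) = r powr (1 + \<beta>) / r powr 2"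
    by simp
  also have "\<dots> = r powr ((1 + \<beta>) - 2)"
    by (rule powr_diff[symmetric])
  also have "\<dots> = 1 / r powr (1 - \<beta>)"
    by (simp add: powr_minus_divide[symmetric])
  finally show ?thesis .
qed

lemma mu_low_inversion:
  assumes "nonneg_meas f"
  shows "mu_low \<beta> (inversion 0 f) = mu_up \<beta> f"
proof -
  let ?F = "esssup_upto (inversion 0 f)"
  have [measurable]: "?F \<in> borel_measurable borel"
    using assms by (intro borel_measurable_esssup_upto borel_measurable_inversion)
  have weight: "ennreal (1 / r\<^sup>2) * ennreal (1 / inverse r powr (1 + \<beta>)) = ennreal (1 / r powr (1 - \<beta>))"
    if "0 < r" for r :: real
    using inversion_weight[OF that, of \<beta>] by (simp add: ennreal_mult''[symmetric])
  have "mu_low \<beta> (inversion 0 f) = (\<integral>\<^sup>+x\<in>{0<..}. ?F x * ennreal (1 / x powr (1 + \<beta>)) \<partial>lborel)"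
    by (simp add: mu_low_esssup_upto nn_integral_M0)
  also have "\<dots> = (\<integral>\<^sup>+r\<in>{0<..}. ennreal (1 / r\<^sup>2) * (?F (inverse r) * ennreal (1 / inverse r powr (1 + \<beta>))) \<partial>lborel)"
    by (rule nn_integral_inverse_substitution) measurable
  also have "\<dots> = mu_up \<beta> f"
    unfolding mu_up_def nn_integral_M0 using assms
    by (intro nn_integral_cong)
      (auto simp: esssup_atLeast_eq_esssup_upto_inversion weight mult_ac split: split_indicator)
  finally show ?thesis .
qed

lemma mu_up_inversion:
  assumes "nonneg_meas f"
  shows "mu_up \<beta> (inversion 0 f) = mu_low \<beta> f"
proof -
  have "mu_up \<beta> (inversion 0 f) = mu_low \<beta> (inversion 0 (inversion 0 f))"
    using nonneg_meas_inversion[OF assms] by (rule mu_low_inversion[symmetric])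
  also have "\<dots> = mu_low \<beta> f"
    by (rule mu_low_cong) (simp add: inversion_inversion)
  finally show ?thesis .
qed

lemma Sup_pair_int_nu_low_eq:
  assumes "0 < \<beta>" "nonneg_meas f"
  shows "Sup {pair_int f g | g. nonneg_meas g \<and> nu_low \<beta> g \<le> 1} = ennreal \<beta> * mu_up \<beta> f"
proof -
  have "Sup {pair_int f g | g. nonneg_meas g \<and> nu_low \<beta> g \<le> 1}
      = Sup {pair_int (inversion 0 f) h | h. nonneg_meas h \<and> nu_up \<beta> h \<le> 1}"
  proof (rule Sup_setcompr_transfer[where T = "inversion 2" and T' = "inversion 2"])
    fix g assume "nonneg_meas g \<and> nu_low \<beta> g \<le> 1"
    with assms(2) show "(nonneg_meas (inversion 2 g) \<and> nu_up \<beta> (inversion 2 g) \<le> 1)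
        \<and> pair_int f g = pair_int (inversion 0 f) (inversion 2 g)"
      by (simp add: nonneg_meas_inversion nu_up_inversion pair_int_inversion)
  next
    fix h assume "nonneg_meas h \<and> nu_up \<beta> h \<le> 1"
    with assms(2) show "(nonneg_meas (inversion 2 h) \<and> nu_low \<beta> (inversion 2 h) \<le> 1)
        \<and> pair_int (inversion 0 f) h = pair_int f (inversion 2 h)"
      by (simp add: nonneg_meas_inversion nu_low_inversion pair_int_inversion_left)
  qed
  also have "\<dots> = ennreal \<beta> * mu_up \<beta> f"
    using assms by (simp add: Sup_pair_int_nu_up_eq nonneg_meas_inversion mu_low_inversion)
  finally show ?thesis .
qed

lemma Sup_pair_int_mu_up_eq:
  assumes "0 < \<beta>" "nonneg_meas g"
  shows "Sup {pair_int f g | f. nonneg_meas f \<and> mu_up \<beta> f \<le> 1} = ennreal \<beta> * nu_low \<beta> g"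
proof -
  have "Sup {pair_int f g | f. nonneg_meas f \<and> mu_up \<beta> f \<le> 1}
      = Sup {pair_int h (inversion 2 g) | h. nonneg_meas h \<and> mu_low \<beta> h \<le> 1}"
  proof (rule Sup_setcompr_transfer[where T = "inversion 0" and T' = "inversion 0"])
    fix f assume "nonneg_meas f \<and> mu_up \<beta> f \<le> 1"
    with assms(2) show "(nonneg_meas (inversion 0 f) \<and> mu_low \<beta> (inversion 0 f) \<le> 1)
        \<and> pair_int f g = pair_int (inversion 0 f) (inversion 2 g)"
      by (simp add: nonneg_meas_inversion mu_low_inversion pair_int_inversion)
  next
    fix h assume "nonneg_meas h \<and> mu_low \<beta> h \<le> 1"
    with assms(2) show "(nonneg_meas (inversion 0 h) \<and> mu_up \<beta> (inversion 0 h) \<le> 1)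
        \<and> pair_int h (inversion 2 g) = pair_int (inversion 0 h) g"
      by (simp add: nonneg_meas_inversion mu_up_inversion pair_int_inversion_right)
  qed
  also have "\<dots> = ennreal \<beta> * nu_low \<beta> g"
    using assms by (simp add: Sup_pair_int_mu_low_eq nonneg_meas_inversion nu_up_inversion)
  finally show ?thesis .
qed

theorem theorem3p1:
  fixes \<alpha> \<beta> :: real
  assumes "\<alpha> > 0" and "\<beta> > 0"
  shows "(\<forall>f. nonneg_meas f \<longrightarrow>
            Sup {pair_int f g | g. nonneg_meas g \<and> nu_up \<alpha> g \<le> 1} = ennreal \<alpha> * mu_low \<alpha> f
          \<and> Sup {pair_int f g | g. nonneg_meas g \<and> nu_low \<beta> g \<le> 1} = ennreal \<beta> * mu_up \<beta> f)
       \<and> (\<forall>g. nonneg_meas g \<longrightarrow>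
            Sup {pair_int f g | f. nonneg_meas f \<and> mu_low \<alpha> f \<le> 1} = ennreal \<alpha> * nu_up \<alpha> g
          \<and> Sup {pair_int f g | f. nonneg_meas f \<and> mu_up \<beta> f \<le> 1} = ennreal \<beta> * nu_low \<beta> g)"
  using assms
  by (simp add: Sup_pair_int_nu_up_eq Sup_pair_int_nu_low_eq Sup_pair_int_mu_low_eq Sup_pair_int_mu_up_eq)

end
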